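(* Let $(X_n)_{n\le0}$ be a monotonic Markov process whose state spaces $A_n$ are totally ordered, with a given increasing representation $(f_n,U_n)_{n\le0}$, and let $Y_n(m,x)$ be the associated Propp–Wilson coupling. Let $\rho_0$ be a linear (compact) distance on $A_0$ and let $(\rho_n)_{n\le0}$ be the iterated Kantorovich pseudometrics starting from $\rho_0$. Then for every $n\le 0$, $\rho_n$ is a linear pseudometric on $A_n$, and for all $y,z\in A_n$, $\rho_n(y,z)$ equals the Kantorovich distance (induced by $\rho_0$) between $\mathcal{L}(X_0\mid X_n=y)$ and $\mathcal{L}(X_0\mid X_n=z)$, and $$\rho_n(y,z)=\mathbb{E}\big[\rho_0\big(Y_0(n,y),Y_0(n,z)\big)\big].$$
   Context: Markov process: $X_n$ valued in $A_n$, kernels $P_n(x,\cdot)=\mathcal{L}(X_n\mid X_{n-1}=x)$. $\mu\le_{st}\nu$ means there is a coupling with $X_\mu\le X_\nu$ a.s.; the process is monotonic if $x\le x'$ implies $P_n(x,\cdot)\le_{st}P_n(x',\cdot)$. An increasing representation is $(f_n,U_n)_{n\le0}$ with $(U_n)$ a sequence such that $U_n$ is independent of $\sigma(X_m,U_m;m\le n-1)$, $X_n=f_n(X_{n-1},U_n)$ a.s., $f_n(x,U_n)$ has law $P_n(x,\cdot)$ for each $x$, and $f_n(x,U_n)\le f_n(x',U_n)$ a.s. whenever $x\le x'$. Propp–Wilson coupling: $Y_m(m,x)=x$ and $Y_{k+1}(m,x)=f_{k+1}(Y_k(m,x),U_{k+1})$ for $m\le k<0$. A pseudometric $\rho$ on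 an ordered set is linear if $\rho(a,c)=\rho(a,b)+\rho(b,c)$ for $a\le b\le c$. Kantorovich pseudometric: $\rho'(\mu,\nu)=\inf\mathbb E[\rho(X_\mu,X_\nu)]$ over couplings. Iterated Kantorovich pseudometrics: $\rho_n$ on $A_n$ is defined recursively for $n<0$ by $\rho_n(x,x')=(\rho_{n+1})'\big(\mathcal{L}(X_{n+1}\mid X_n=x),\mathcal{L}(X_{n+1}\mid X_n=x')\big)$. *)

theory Defs
  imports "HOL-Probability.Probability"
begin

definition couplings :: "'a measure \<Rightarrow> 'a measure \<Rightarrow> 'a measure \<Rightarrow> ('a \<times> 'a) measure set" where
  "couplings S \<mu> \<nu> = {\<pi>. prob_space \<pi> \<and> sets \<pi> = sets (S \<Otimes>\<^sub>M S)
                        \<and> distr \<pi> S fst = \<mu> \<and> distr \<pi> S snd = \<nu>}"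

definition stoch_le :: "'a::linorder measure \<Rightarrow> 'a measure \<Rightarrow> 'a measure \<Rightarrow> bool" where
  "stoch_le S \<mu> \<nu> \<longleftrightarrow> (\<exists>\<pi>\<in>couplings S \<mu> \<nu>. AE p in \<pi>. fst p \<le> snd p)"

definition kantorovich :: "'a measure \<Rightarrow> ('a \<Rightarrow> 'a \<Rightarrow> real) \<Rightarrow> 'a measure \<Rightarrow> 'a measure \<Rightarrow> real" where
  "kantorovich S \<rho> \<mu> \<nu> =
     enn2real (INF \<pi>\<in>couplings S \<mu> \<nu>. \<integral>\<^sup>+ p. ennreal (\<rho> (fst p) (snd p)) \<partial>\<pi>)"

definition pseudometric_on :: "'a set \<Rightarrow> ('a \<Rightarrow> 'a \<Rightarrow> real) \<Rightarrow> bool" where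
  "pseudometric_on A \<rho> \<longleftrightarrow>
     (\<forall>x\<in>A. \<rho> x x = 0) \<and> (\<forall>x\<in>A. \<forall>y\<in>A. 0 \<le> \<rho> x y \<and> \<rho> x y = \<rho> y x) \<and>
     (\<forall>x\<in>A. \<forall>y\<in>A. \<forall>z\<in>A. \<rho> x z \<le> \<rho> x y + \<rho> y z)"

definition linear_on :: "'a::linorder set \<Rightarrow> ('a \<Rightarrow> 'a \<Rightarrow> real) \<Rightarrow> bool" where
  "linear_on A \<rho> \<longleftrightarrow>
     (\<forall>a\<in>A. \<forall>b\<in>A. \<forall>c\<in>A. a \<le> b \<and> b \<le> c \<longrightarrow> \<rho> a c = \<rho> a b + \<rho> b c)"

text \<open>Time n <= 0 is encoded as n = - k with k :: nat.
  iter_kant S P rho0 k is rho_{-k}; for n = -(k+1):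
  rho_n(x,x') = (rho_{n+1})'(P_{n+1}(x,.), P_{n+1}(x',.)).\<close>
fun iter_kant :: "(int \<Rightarrow> 'a measure) \<Rightarrow> (int \<Rightarrow> 'a \<Rightarrow> 'a measure) \<Rightarrow> ('a \<Rightarrow> 'a \<Rightarrow> real)
                   \<Rightarrow> nat \<Rightarrow> 'a \<Rightarrow> 'a \<Rightarrow> real" where
  "iter_kant S P \<rho>0 0 = \<rho>0"
| "iter_kant S P \<rho>0 (Suc k) =
     (\<lambda>x x'. kantorovich (S (- int k)) (iter_kant S P \<rho>0 k) (P (- int k) x) (P (- int k) x'))"

text \<open>Conditional law of X_0 given X_{-k} = y: composition of the transition kernels
  P_{-k+1}, ..., P_0 started at y.\<close>
fun cond_law :: "(int \<Rightarrow> 'a measure) \<Rightarrow> (int \<Rightarrow> 'a \<Rightarrow> 'a measure) \<Rightarrow> nat \<Rightarrow> 'a \<Rightarrow> 'a measure" where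
  "cond_law S P 0 y = return (S 0) y"
| "cond_law S P (Suc k) y = P (- int k) y \<bind> cond_law S P k"

text \<open>Propp--Wilson coupling: propp_wilson f U m x j \<omega> = Y_{m+j}(m,x)(\<omega>).\<close>
fun propp_wilson :: "(int \<Rightarrow> 'a \<Rightarrow> 'u \<Rightarrow> 'a) \<Rightarrow> (int \<Rightarrow> 'w \<Rightarrow> 'u) \<Rightarrow> int \<Rightarrow> 'a \<Rightarrow> nat \<Rightarrow> 'w \<Rightarrow> 'a" where
  "propp_wilson f U m x 0 \<omega> = x"
| "propp_wilson f U m x (Suc j) \<omega> =
     f (m + int j + 1) (propp_wilson f U m x j \<omega>) (U (m + int j + 1) \<omega>)"

end

theory Submission
  imports Defs
begin

text \<open>A linear distance on the totally ordered compact space \<open>A\<^sub>0\<close> has the form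
  \<open>\<rho>\<^sub>0(a, b) = \<bar>F a - F b\<bar>\<close> with \<open>F\<close> bounded, increasing and Borel. Let
  \<open>G\<^sub>k(y) = E[F(X\<^sub>0) | X\<^sub>-\<^sub>k = y]\<close>. The increasing representation makes every \<open>G\<^sub>k\<close>
  increasing, and it couples two one-step moves from \<open>y \<le> z\<close> so that they stay ordered.
  For a cost \<open>\<bar>g a - g b\<bar>\<close> every coupling costs at least the difference of the \<open>g\<close>-means,
  and an ordered coupling attains this bound; by induction \<open>\<rho>\<^sub>-\<^sub>k(y, z) = \<bar>G\<^sub>k y - G\<^sub>k z\<bar>\<close>.
  The Propp--Wilson pair started at \<open>y, z\<close> is a coupling of the conditional laws of \<open>X\<^sub>0\<close>,
  and since \<open>U\<^sub>n\<close> is independent of the past its expected cost can be computed one step at a time,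
  which again gives \<open>\<bar>G\<^sub>k y - G\<^sub>k z\<bar>\<close>.\<close>

lemma linear_metric_eq_abs_diff:
  fixes A :: "'a::linorder set"
  assumes "Metric_space A d" and lin: "linear_on A d" and a0: "a0 \<in> A"
  obtains g where "mono_on A g" and "\<And>a b. a \<in> A \<Longrightarrow> b \<in> A \<Longrightarrow> d a b = \<bar>g a - g b\<bar>"
proof -
  interpret Metric_space A d by fact
  define g where "g a = (if a0 \<le> a then d a0 a else - d a0 a)" for a
  have split: "d a c = d a b + d b c" if "a \<in> A" "b \<in> A" "c \<in> A" "a \<le> b" "b \<le> c" for a b c
    using lin that unfolding linear_on_def by blast
  have diff: "d a b = g b - g a" if "a \<in> A" "b \<in> A" "a \<le> b" for a b
  proof -
    consider "a0 \<le> a" | "a < a0" "a0 \<le> b" | "b < a0" using that by fastforce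
    then show ?thesis
    proof cases
      case 1 then show ?thesis using split[of a0 a b] that a0 by (auto simp: g_def)
    next
      case 2 then show ?thesis using split[of a a0 b] that a0 commute[of a a0] by (simp add: g_def)
    next
      case 3
      then have "\<not> a0 \<le> a" "\<not> a0 \<le> b" using that by auto
      then show ?thesis using split[of a b a0] 3 that a0 commute[of a a0] commute[of b a0]
        by (simp add: g_def)
    qed
  qed
  show ?thesis
  proof
    show "mono_on A g"
      by (intro mono_onI) (metis diff nonneg diff_ge_0_iff_ge)
    show "d a b = \<bar>g a - g b\<bar>" if "a \<in> A" "b \<in> A" for a b
      using that diff[of a b] diff[of b a] nonneg[of a b] commute[of a b]
      by (cases "a \<le> b") (simp_all add: abs_if)
  qed
qed

lemma (in Metric_space) borel_measurable_if_lipschitz: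
  assumes sets_N: "sets N = sigma_sets M {W. openin mtopology W}" and space_N: "space N = M"
    and lip: "\<And>a b. a \<in> M \<Longrightarrow> b \<in> M \<Longrightarrow> \<bar>g a - g b\<bar> \<le> d a b"
  shows "g \<in> borel_measurable N"
proof (rule borel_measurableI_less)
  fix y
  have "openin mtopology {x\<in>M. g x < y}"
    unfolding openin_mtopology
  proof (intro conjI allI impI)
    fix x assume x: "x \<in> {x\<in>M. g x < y}"
    show "\<exists>r>0. mball x r \<subseteq> {x\<in>M. g x < y}"
    proof (intro exI conjI subsetI)
      show "0 < y - g x" using x by simp
      fix b assume "b \<in> mball x (y - g x)"
      then show "b \<in> {x\<in>M. g x < y}" using lip[of b x] commute[of x b] x by auto
    qed
  qed auto
  then show "{x\<in>space N. g x < y} \<in> sets N"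
    using sets_N space_N by auto
qed

lemma linear_compact_metric_eq_abs_diff:
  fixes A :: "'a::linorder set"
  assumes metric: "Metric_space A d" and compact: "compact_space (Metric_space.mtopology A d)"
    and sets_N: "sets N = sigma_sets A {W. openin (Metric_space.mtopology A d) W}" and space_N: "space N = A"
    and linear: "linear_on A d" and nonempty: "A \<noteq> {}"
  obtains g c where "g \<in> borel_measurable N" and "\<And>a. a \<in> A \<Longrightarrow> \<bar>g a\<bar> \<le> c"
    and "mono_on A g" and "\<And>a b. a \<in> A \<Longrightarrow> b \<in> A \<Longrightarrow> d a b = \<bar>g a - g b\<bar>"
proof -
  interpret Metric_space A d by (rule metric)
  obtain a0 where a0: "a0 \<in> A" using nonempty by blast
  obtain g where mono: "mono_on A g" and d: "\<And>a b. a \<in> A \<Longrightarrow> b \<in> A \<Longrightarrow> d a b = \<bar>g a - g b\<bar>"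
    using linear_metric_eq_abs_diff[OF metric linear a0] by blast
  obtain B where B: "\<And>a b. a \<in> A \<Longrightarrow> b \<in> A \<Longrightarrow> d a b \<le> B"
    using compactin_imp_mbounded[of A] compact
    unfolding compact_space_def topspace_mtopology mbounded_alt by blast
  show ?thesis
  proof
    show "g \<in> borel_measurable N"
      using d by (intro borel_measurable_if_lipschitz[OF sets_N space_N]) simp
    show "\<bar>g a\<bar> \<le> \<bar>g a0\<bar> + B" if "a \<in> A" for a
      using d[OF that a0] B[OF that a0] by linarith
  qed (use mono d in auto)
qed

lemma pseudometric_on_abs_diff:
  assumes "\<And>a b. a \<in> A \<Longrightarrow> b \<in> A \<Longrightarrow> d a b = \<bar>g a - g b\<bar>"
  shows "pseudometric_on A d"
  using assms by (auto simp: pseudometric_on_def abs_minus_commute)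

lemma linear_on_abs_diff:
  fixes g :: "'a::linorder \<Rightarrow> real"
  assumes "mono_on A g" and "\<And>a b. a \<in> A \<Longrightarrow> b \<in> A \<Longrightarrow> d a b = \<bar>g a - g b\<bar>"
  shows "linear_on A d"
  unfolding linear_on_def
proof (intro ballI impI)
  fix a b c assume "a \<in> A" "b \<in> A" "c \<in> A" and "a \<le> b \<and> b \<le> c"
  then show "d a c = d a b + d b c"
    using assms mono_onD[OF assms(1), of a b] mono_onD[OF assms(1), of b c] by simp
qed

lemma couplings_lower_bound:
  fixes g :: "'a \<Rightarrow> real"
  assumes \<pi>: "\<pi> \<in> couplings S \<mu> \<nu>" and g: "g \<in> borel_measurable S"
    and bound: "\<And>a. a \<in> space S \<Longrightarrow> \<bar>g a\<bar> \<le> c"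
  shows "ennreal \<bar>(\<integral>a. g a \<partial>\<mu>) - (\<integral>a. g a \<partial>\<nu>)\<bar> \<le> (\<integral>\<^sup>+p. ennreal \<bar>g (fst p) - g (snd p)\<bar> \<partial>\<pi>)"
proof -
  have sets_\<pi>: "sets \<pi> = sets (S \<Otimes>\<^sub>M S)" and marginals: "distr \<pi> S fst = \<mu>" "distr \<pi> S snd = \<nu>"
    using \<pi> by (auto simp: couplings_def)
  interpret prob_space \<pi> using \<pi> by (simp add: couplings_def)
  have space_\<pi>: "space \<pi> = space S \<times> space S"
    using sets_eq_imp_space_eq[OF sets_\<pi>] by (simp add: space_pair_measure)
  have fst: "fst \<in> \<pi> \<rightarrow>\<^sub>M S" and snd: "snd \<in> \<pi> \<rightarrow>\<^sub>M S"
    using measurable_cong_sets[OF sets_\<pi> refl] by auto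
  have int_fst: "integrable \<pi> (\<lambda>p. g (fst p))" and int_snd: "integrable \<pi> (\<lambda>p. g (snd p))"
    using bound space_\<pi> measurable_compose[OF fst g] measurable_compose[OF snd g]
    by (auto intro!: integrable_const_bound[where B=c])
  have "\<bar>(\<integral>a. g a \<partial>\<mu>) - (\<integral>a. g a \<partial>\<nu>)\<bar> = \<bar>\<integral>p. g (fst p) - g (snd p) \<partial>\<pi>\<bar>"
    using integral_distr[OF fst g] integral_distr[OF snd g] marginals int_fst int_snd by simp
  also have "\<dots> \<le> (\<integral>p. \<bar>g (fst p) - g (snd p)\<bar> \<partial>\<pi>)"
    using integral_norm_bound[of \<pi> "\<lambda>p. g (fst p) - g (snd p)"] by simp
  finally show ?thesis
    using nn_integral_eq_integral[of \<pi> "\<lambda>p. \<bar>g (fst p) - g (snd p)\<bar>"] int_fst int_snd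
    by (simp add: ennreal_leI)
qed

lemma (in prob_space) distr_pair_in_couplings:
  assumes "A \<in> M \<rightarrow>\<^sub>M S" and "B \<in> M \<rightarrow>\<^sub>M S"
  shows "distr M (S \<Otimes>\<^sub>M S) (\<lambda>\<omega>. (A \<omega>, B \<omega>)) \<in> couplings S (distr M S A) (distr M S B)"
  using assms prob_space_distr[OF measurable_Pair[OF assms]]
  by (simp add: couplings_def distr_distr comp_def)

lemma (in prob_space) integrable_bounded_comp:
  fixes g :: "'b \<Rightarrow> real"
  assumes A: "A \<in> M \<rightarrow>\<^sub>M S" and g: "g \<in> borel_measurable S"
    and bound: "\<And>a. a \<in> space S \<Longrightarrow> \<bar>g a\<bar> \<le> c"
  shows "integrable M (\<lambda>\<omega>. g (A \<omega>))"
  using measurable_space[OF A] bound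
  by (intro integrable_const_bound[where B=c] AE_I2 measurable_compose[OF A g]) auto

lemma (in prob_space) integrable_abs_diff_bounded_comp:
  fixes g :: "'b \<Rightarrow> real"
  assumes A: "A \<in> M \<rightarrow>\<^sub>M S" and B: "B \<in> M \<rightarrow>\<^sub>M S"
    and g: "g \<in> borel_measurable S" and bound: "\<And>a. a \<in> space S \<Longrightarrow> \<bar>g a\<bar> \<le> c"
  shows "integrable M (\<lambda>\<omega>. \<bar>g (A \<omega>) - g (B \<omega>)\<bar>)"
  using integrable_bounded_comp[OF A g bound] integrable_bounded_comp[OF B g bound] by simp

lemma (in prob_space) kantorovich_eq_if_attained:
  fixes g :: "'b \<Rightarrow> real"
  assumes A: "A \<in> M \<rightarrow>\<^sub>M S" and B: "B \<in> M \<rightarrow>\<^sub>M S"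
    and g: "g \<in> borel_measurable S" and bound: "\<And>a. a \<in> space S \<Longrightarrow> \<bar>g a\<bar> \<le> c"
    and d: "\<And>a b. a \<in> space S \<Longrightarrow> b \<in> space S \<Longrightarrow> d a b = \<bar>g a - g b\<bar>"
    and attained: "(\<integral>\<omega>. \<bar>g (A \<omega>) - g (B \<omega>)\<bar> \<partial>M) = \<bar>(\<integral>\<omega>. g (A \<omega>) \<partial>M) - (\<integral>\<omega>. g (B \<omega>) \<partial>M)\<bar>"
  shows "kantorovich S d (distr M S A) (distr M S B) = \<bar>(\<integral>\<omega>. g (A \<omega>) \<partial>M) - (\<integral>\<omega>. g (B \<omega>) \<partial>M)\<bar>"
proof -
  let ?r = "\<bar>(\<integral>\<omega>. g (A \<omega>) \<partial>M) - (\<integral>\<omega>. g (B \<omega>) \<partial>M)\<bar>"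
  let ?cost = "\<lambda>\<pi>. \<integral>\<^sup>+p. ennreal (d (fst p) (snd p)) \<partial>\<pi>"
  have cost: "?cost \<pi> = (\<integral>\<^sup>+p. ennreal \<bar>g (fst p) - g (snd p)\<bar> \<partial>\<pi>)"
    if "\<pi> \<in> couplings S \<mu> \<nu>" for \<pi> \<mu> \<nu>
  proof (rule nn_integral_cong)
    fix p assume "p \<in> space \<pi>"
    moreover have "space \<pi> = space S \<times> space S"
      using that sets_eq_imp_space_eq[of \<pi> "S \<Otimes>\<^sub>M S"] by (simp add: couplings_def space_pair_measure)
    ultimately show "ennreal (d (fst p) (snd p)) = ennreal \<bar>g (fst p) - g (snd p)\<bar>"
      using d by auto
  qed
  have means: "(\<integral>a. g a \<partial>distr M S A) = (\<integral>\<omega>. g (A \<omega>) \<partial>M)" "(\<integral>a. g a \<partial>distr M S B) = (\<integral>\<omega>. g (B \<omega>) \<partial>M)"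
    using integral_distr[OF A g] integral_distr[OF B g] by simp_all
  have lower: "ennreal ?r \<le> ?cost \<pi>" if "\<pi> \<in> couplings S (distr M S A) (distr M S B)" for \<pi>
    using couplings_lower_bound[OF that g bound] cost[OF that] means by simp
  let ?\<pi>0 = "distr M (S \<Otimes>\<^sub>M S) (\<lambda>\<omega>. (A \<omega>, B \<omega>))"
  have \<pi>0: "?\<pi>0 \<in> couplings S (distr M S A) (distr M S B)"
    by (rule distr_pair_in_couplings[OF A B])
  have "?cost ?\<pi>0 = (\<integral>\<^sup>+\<omega>. ennreal \<bar>g (A \<omega>) - g (B \<omega>)\<bar> \<partial>M)"
    using cost[OF \<pi>0] g by (simp add: nn_integral_distr[OF measurable_Pair[OF A B]])
  also have "\<dots> = ennreal ?r"
    using attained integrable_bounded_comp[OF A g bound] integrable_bounded_comp[OF B g bound]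
    by (subst nn_integral_eq_integral) auto
  finally have "(INF \<pi>\<in>couplings S (distr M S A) (distr M S B). ?cost \<pi>) = ennreal ?r"
    using \<pi>0 lower by (intro antisym INF_lower2[OF \<pi>0] INF_greatest) auto
  then show ?thesis by (simp add: kantorovich_def)
qed

lemma (in prob_space) pair_measure_distr_eq_if_indep_set:
  assumes W: "W \<in> M \<rightarrow>\<^sub>M N" and Y: "Y \<in> M \<rightarrow>\<^sub>M T"
    and indep: "indep_set (sets (vimage_algebra (space M) W N)) (sets (vimage_algebra (space M) Y T))"
  shows "distr M N W \<Otimes>\<^sub>M distr M T Y = distr M (N \<Otimes>\<^sub>M T) (\<lambda>\<omega>. (W \<omega>, Y \<omega>))"
proof (rule pair_measure_eqI)
  show "sigma_finite_measure (distr M N W)" "sigma_finite_measure (distr M T Y)"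
    using prob_space_distr[OF W] prob_space_distr[OF Y] by (simp_all add: prob_space_imp_sigma_finite)
  show "sets (distr M N W \<Otimes>\<^sub>M distr M T Y) = sets (distr M (N \<Otimes>\<^sub>M T) (\<lambda>\<omega>. (W \<omega>, Y \<omega>)))"
    by (simp add: sets_pair_measure_cong[OF sets_distr sets_distr])
  fix A B assume "A \<in> sets (distr M N W)" and "B \<in> sets (distr M T Y)"
  then have A: "A \<in> sets N" and B: "B \<in> sets T" by simp_all
  have "(\<lambda>\<omega>. (W \<omega>, Y \<omega>)) -` (A \<times> B) \<inter> space M = (W -` A \<inter> space M) \<inter> (Y -` B \<inter> space M)"
    by auto
  then show "emeasure (distr M N W) A * emeasure (distr M T Y) B
      = emeasure (distr M (N \<Otimes>\<^sub>M T) (\<lambda>\<omega>. (W \<omega>, Y \<omega>))) (A \<times> B)"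
    using indep_setD[OF indep in_vimage_algebra[OF A] in_vimage_algebra[OF B]] A B
    by (simp add: emeasure_distr[OF W] emeasure_distr[OF Y] emeasure_distr[OF measurable_Pair[OF W Y]]
        emeasure_eq_measure ennreal_mult)
qed

lemma (in prob_space) nn_integral_indep_set:
  assumes W: "W \<in> M \<rightarrow>\<^sub>M N" and Y: "Y \<in> M \<rightarrow>\<^sub>M T"
    and indep: "indep_set (sets (vimage_algebra (space M) W N)) (sets (vimage_algebra (space M) Y T))"
    and g: "g \<in> borel_measurable (N \<Otimes>\<^sub>M T)"
  shows "(\<integral>\<^sup>+\<omega>. g (W \<omega>, Y \<omega>) \<partial>M) = (\<integral>\<^sup>+\<omega>. \<integral>\<^sup>+\<omega>'. g (W \<omega>, Y \<omega>') \<partial>M \<partial>M)"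
proof -
  interpret Y: prob_space "distr M T Y" by (rule prob_space_distr[OF Y])
  have g': "g \<in> borel_measurable (distr M N W \<Otimes>\<^sub>M distr M T Y)"
    using g by (simp cong: measurable_cong_sets)
  have inner: "(\<lambda>w. \<integral>\<^sup>+\<omega>'. g (w, Y \<omega>') \<partial>M) \<in> borel_measurable N"
    using Y g by measurable
  have "(\<integral>\<^sup>+\<omega>. g (W \<omega>, Y \<omega>) \<partial>M) = (\<integral>\<^sup>+p. g p \<partial>(distr M N W \<Otimes>\<^sub>M distr M T Y))"
    using g by (simp add: pair_measure_distr_eq_if_indep_set[OF W Y indep]
        nn_integral_distr[OF measurable_Pair[OF W Y]])
  also have "\<dots> = (\<integral>\<^sup>+w. \<integral>\<^sup>+u. g (w, u) \<partial>distr M T Y \<partial>distr M N W)"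
    by (rule Y.nn_integral_fst[OF g', symmetric])
  also have "\<dots> = (\<integral>\<^sup>+w. \<integral>\<^sup>+\<omega>'. g (w, Y \<omega>') \<partial>M \<partial>distr M N W)"
    by (intro nn_integral_cong) (simp add: nn_integral_distr[OF Y] measurable_Pair2[OF g])
  also have "\<dots> = (\<integral>\<^sup>+\<omega>. \<integral>\<^sup>+\<omega>'. g (W \<omega>, Y \<omega>') \<partial>M \<partial>M)"
    using inner by (simp add: nn_integral_distr[OF W])
  finally show ?thesis .
qed

lemma integral_abs_diff_eq_if_AE_le:
  fixes g h :: "'a \<Rightarrow> real"
  assumes "integrable M g" and "integrable M h" and "AE \<omega> in M. g \<omega> \<le> h \<omega>"
  shows "(\<integral>\<omega>. \<bar>g \<omega> - h \<omega>\<bar> \<partial>M) = \<bar>(\<integral>\<omega>. g \<omega> \<partial>M) - (\<integral>\<omega>. h \<omega> \<partial>M)\<bar>"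
proof -
  have "(\<integral>\<omega>. \<bar>g \<omega> - h \<omega>\<bar> \<partial>M) = (\<integral>\<omega>. h \<omega> - g \<omega> \<partial>M)"
    using assms by (intro integral_cong_AE) auto
  also have "\<dots> = (\<integral>\<omega>. h \<omega> \<partial>M) - (\<integral>\<omega>. g \<omega> \<partial>M)"
    using assms by simp
  finally show ?thesis
    using integral_mono_AE[OF assms] by simp
qed

lemma AE_mono_on_comp:
  assumes le: "AE \<omega> in M. X \<omega> \<le> Y \<omega>" and g: "mono_on A g"
    and X: "\<And>\<omega>. \<omega> \<in> space M \<Longrightarrow> X \<omega> \<in> A" and Y: "\<And>\<omega>. \<omega> \<in> space M \<Longrightarrow> Y \<omega> \<in> A"
  shows "AE \<omega> in M. g (X \<omega>) \<le> g (Y \<omega>)"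
  by (rule AE_mp[OF le AE_I2]) (auto intro: mono_onD[OF g] X Y)

locale increasing_representation =
  fixes M :: "'w measure"
    and S :: "int \<Rightarrow> 'a::linorder measure"
    and V :: "int \<Rightarrow> 'u measure"
    and X :: "int \<Rightarrow> 'w \<Rightarrow> 'a"
    and U :: "int \<Rightarrow> 'w \<Rightarrow> 'u"
    and f :: "int \<Rightarrow> 'a \<Rightarrow> 'u \<Rightarrow> 'a"
    and P :: "int \<Rightarrow> 'a \<Rightarrow> 'a measure"
  assumes prob_space_M: "prob_space M"
    and X_meas: "\<forall>n\<le>0. X n \<in> measurable M (S n)"
    and P_kernel: "\<forall>n\<le>0. P n \<in> measurable (S (n - 1)) (prob_algebra (S n))"
    and U_meas: "\<forall>n\<le>0. U n \<in> measurable M (V n)"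
    and f_meas: "\<forall>n\<le>0. (\<lambda>(x, u). f n x u) \<in> measurable (S (n - 1) \<Otimes>\<^sub>M V n) (S n)"
    and U_indep: "\<forall>n\<le>0. prob_space.indep_set M (sets (vimage_algebra (space M) (U n) (V n)))
                      (sets (vimage_algebra (space M) (\<lambda>\<omega>. \<lambda>m\<in>{..n - 1}. (X m \<omega>, U m \<omega>))
                               (PiM {..n - 1} (\<lambda>m. S m \<Otimes>\<^sub>M V m))))"
    and f_law: "\<forall>n\<le>0. \<forall>x\<in>space (S (n - 1)). P n x = distr M (S n) (\<lambda>\<omega>. f n x (U n \<omega>))"
    and f_incr: "\<forall>n\<le>0. \<forall>x\<in>space (S (n - 1)). \<forall>x'\<in>space (S (n - 1)).
                   x \<le> x' \<longrightarrow> (AE \<omega> in M. f n x (U n \<omega>) \<le> f n x' (U n \<omega>))"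
begin

sublocale prob_space M by (rule prob_space_M)

lemma measurable_f_U:
  assumes "n \<le> 0"
  shows "(\<lambda>(x, \<omega>). f n x (U n \<omega>)) \<in> S (n - 1) \<Otimes>\<^sub>M M \<rightarrow>\<^sub>M S n"
proof -
  have "(\<lambda>(x, \<omega>). (x, U n \<omega>)) \<in> S (n - 1) \<Otimes>\<^sub>M M \<rightarrow>\<^sub>M S (n - 1) \<Otimes>\<^sub>M V n"
    using U_meas assms
    by (auto intro!: measurable_Pair measurable_compose[OF measurable_snd] simp: split_beta')
  from measurable_comp[OF this f_meas[rule_format, OF assms]] show ?thesis
    by (simp add: comp_def split_beta')
qed

lemma measurable_f_U_step:
  assumes "x \<in> space (S (- int k - 1))"
  shows "(\<lambda>\<omega>. f (- int k) x (U (- int k) \<omega>)) \<in> M \<rightarrow>\<^sub>M S (- int k)"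
  using measurable_Pair2[OF measurable_f_U[of "- int k"] assms] by simp

lemma measurable_propp_wilson:
  assumes "s + int j \<le> 0" and "a \<in> space (S s)"
  shows "propp_wilson f U s a j \<in> M \<rightarrow>\<^sub>M S (s + int j)"
  using assms(1)
proof (induction j)
  case 0
  then show ?case using assms(2) by simp
next
  case (Suc j)
  let ?n = "s + int j + 1"
  have "(\<lambda>\<omega>. (propp_wilson f U s a j \<omega>, U ?n \<omega>)) \<in> M \<rightarrow>\<^sub>M S (?n - 1) \<Otimes>\<^sub>M V ?n"
    using Suc U_meas by (intro measurable_Pair) simp_all
  moreover have "(\<lambda>(x, u). f ?n x u) \<in> S (?n - 1) \<Otimes>\<^sub>M V ?n \<rightarrow>\<^sub>M S ?n"
    using f_meas[rule_format, of ?n] Suc.prems by simp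
  ultimately have "(\<lambda>(x, u). f ?n x u) \<circ> (\<lambda>\<omega>. (propp_wilson f U s a j \<omega>, U ?n \<omega>)) \<in> M \<rightarrow>\<^sub>M S ?n"
    by (rule measurable_comp)
  moreover have "s + int (Suc j) = ?n" by simp
  ultimately show ?case by (simp only: propp_wilson.simps comp_def split)
qed

definition past :: "int \<Rightarrow> 'w \<Rightarrow> int \<Rightarrow> 'a \<times> 'u" where
  "past n \<omega> = (\<lambda>m\<in>{..n - 1}. (X m \<omega>, U m \<omega>))"

abbreviation past_space :: "int \<Rightarrow> (int \<Rightarrow> 'a \<times> 'u) measure" where
  "past_space n \<equiv> PiM {..n - 1} (\<lambda>m. S m \<Otimes>\<^sub>M V m)"

lemma measurable_past: "n \<le> 1 \<Longrightarrow> past n \<in> M \<rightarrow>\<^sub>M past_space n"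
  unfolding past_def using X_meas U_meas by (intro measurable_restrict measurable_Pair) auto

lemma indep_set_past_U:
  assumes n: "n \<le> 0" and \<psi>: "\<psi> \<in> past_space n \<rightarrow>\<^sub>M N"
  shows "indep_set (sets (vimage_algebra (space M) (\<lambda>\<omega>. \<psi> (past n \<omega>)) N))
                   (sets (vimage_algebra (space M) (U n) (V n)))"
proof -
  let ?W = "\<lambda>\<omega>. \<psi> (past n \<omega>)"
  have W: "?W \<in> M \<rightarrow>\<^sub>M N" using measurable_compose[OF measurable_past \<psi>] n by simp
  have past_events: "sets (vimage_algebra (space M) ?W N) \<subseteq> sets (vimage_algebra (space M) (past n) (past_space n))"
  proof
    fix a assume "a \<in> sets (vimage_algebra (space M) ?W N)"
    then obtain A where A: "A \<in> sets N" and a: "a = ?W -` A \<inter> space M"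
      using measurable_space[OF W] by (auto simp: sets_vimage_algebra2)
    have "a = past n -` (\<psi> -` A \<inter> space (past_space n)) \<inter> space M"
      using a measurable_space[OF measurable_past] n by auto
    then show "a \<in> sets (vimage_algebra (space M) (past n) (past_space n))"
      by (simp only:) (rule in_vimage_algebra[OF measurable_sets[OF \<psi> A]])
  qed
  have "indep_set (sets (vimage_algebra (space M) (U n) (V n)))
                  (sets (vimage_algebra (space M) (past n) (past_space n)))"
    using U_indep n by (simp add: past_def[abs_def])
  then have "sets (vimage_algebra (space M) (U n) (V n)) \<subseteq> events"
    and "sets (vimage_algebra (space M) (past n) (past_space n)) \<subseteq> events"
    and "\<And>a b. b \<in> sets (vimage_algebra (space M) (U n) (V n)) \<Longrightarrow>
      a \<in> sets (vimage_algebra (space M) (past n) (past_space n)) \<Longrightarrow> prob (a \<inter> b) = prob a * prob b"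
    unfolding indep_sets2_eq by (simp_all, metis Int_commute mult.commute)
  then show ?thesis
    using past_events unfolding indep_sets2_eq by blast
qed

text \<open>A Propp--Wilson chain run up to time \<open>n - 1\<close> is a function of the past before \<open>n\<close>,
  reading the innovations off a path \<open>h\<close> as \<open>snd (h m)\<close>; hence it is independent of \<open>U\<^sub>n\<close>.\<close>

lemma propp_wilson_eq_past:
  assumes "s + int j \<le> n - 1"
  shows "propp_wilson f U s a j \<omega> = propp_wilson f (\<lambda>m h. snd (h m)) s a j (past n \<omega>)"
  using assms by (induction j) (auto simp: past_def)

lemma measurable_propp_wilson_past:
  assumes "s + int j \<le> n - 1" and "n \<le> 1" and "a \<in> space (S s)"
  shows "propp_wilson f (\<lambda>m h. snd (h m)) s a j \<in> past_space n \<rightarrow>\<^sub>M S (s + int j)"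
  using assms(1)
proof (induction j)
  case 0
  then show ?case using assms(3) by simp
next
  case (Suc j)
  let ?m = "s + int j + 1"
  have "(\<lambda>h. h ?m) \<in> past_space n \<rightarrow>\<^sub>M S ?m \<Otimes>\<^sub>M V ?m"
    by (rule measurable_component_singleton) (use Suc.prems in simp)
  then have "(\<lambda>h. snd (h ?m)) \<in> past_space n \<rightarrow>\<^sub>M V ?m"
    by (rule measurable_compose[OF _ measurable_snd])
  then have "(\<lambda>h. (propp_wilson f (\<lambda>m h. snd (h m)) s a j h, snd (h ?m))) \<in> past_space n \<rightarrow>\<^sub>M S (?m - 1) \<Otimes>\<^sub>M V ?m"
    using Suc by (intro measurable_Pair) simp_all
  moreover have "(\<lambda>(x, u). f ?m x u) \<in> S (?m - 1) \<Otimes>\<^sub>M V ?m \<rightarrow>\<^sub>M S ?m"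
    using f_meas[rule_format, of ?m] Suc.prems assms(2) by simp
  ultimately have "(\<lambda>(x, u). f ?m x u) \<circ> (\<lambda>h. (propp_wilson f (\<lambda>m h. snd (h m)) s a j h, snd (h ?m)))
      \<in> past_space n \<rightarrow>\<^sub>M S ?m"
    by (rule measurable_comp)
  moreover have "s + int (Suc j) = ?m" by simp
  ultimately show ?case by (simp only: propp_wilson.simps comp_def split)
qed

lemma measurable_f_pair:
  assumes "n \<le> 0"
  shows "(\<lambda>(p, u). (f n (fst p) u, f n (snd p) u)) \<in> (S (n - 1) \<Otimes>\<^sub>M S (n - 1)) \<Otimes>\<^sub>M V n \<rightarrow>\<^sub>M S n \<Otimes>\<^sub>M S n"
proof -
  have f: "(\<lambda>(x, u). f n x u) \<in> S (n - 1) \<Otimes>\<^sub>M V n \<rightarrow>\<^sub>M S n"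
    using f_meas assms by simp
  have "(\<lambda>(p, u). (fst p, u)) \<in> (S (n - 1) \<Otimes>\<^sub>M S (n - 1)) \<Otimes>\<^sub>M V n \<rightarrow>\<^sub>M S (n - 1) \<Otimes>\<^sub>M V n"
    and "(\<lambda>(p, u). (snd p, u)) \<in> (S (n - 1) \<Otimes>\<^sub>M S (n - 1)) \<Otimes>\<^sub>M V n \<rightarrow>\<^sub>M S (n - 1) \<Otimes>\<^sub>M V n"
    by (simp_all add: split_beta' measurable_Pair measurable_compose[OF measurable_fst])
  from measurable_Pair[OF measurable_comp[OF this(1) f] measurable_comp[OF this(2) f]]
  show ?thesis by (simp add: comp_def split_beta')
qed

lemma indep_set_propp_wilson_U:
  assumes n: "s + int j + 1 = n" "n \<le> 0" and a: "a \<in> space (S s)" and b: "b \<in> space (S s)"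
  shows "indep_set (sets (vimage_algebra (space M)
           (\<lambda>\<omega>. (propp_wilson f U s a j \<omega>, propp_wilson f U s b j \<omega>)) (S (n - 1) \<Otimes>\<^sub>M S (n - 1))))
         (sets (vimage_algebra (space M) (U n) (V n)))"
proof -
  let ?Y = "\<lambda>c. propp_wilson f (\<lambda>m h. snd (h m)) s c j"
  have le: "s + int j \<le> n - 1" and "n \<le> 1" and e: "n - 1 = s + int j" using n by simp_all
  from measurable_Pair[OF measurable_propp_wilson_past[OF this(1,2) a] measurable_propp_wilson_past[OF this(1,2) b]]
  have Y: "(\<lambda>h. (?Y a h, ?Y b h)) \<in> past_space n \<rightarrow>\<^sub>M S (n - 1) \<Otimes>\<^sub>M S (n - 1)"
    by (simp only: e)
  have "(\<lambda>\<omega>. (propp_wilson f U s a j \<omega>, propp_wilson f U s b j \<omega>)) = (\<lambda>\<omega>. (?Y a (past n \<omega>), ?Y b (past n \<omega>)))"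
    by (simp only: propp_wilson_eq_past[OF le])
  then show ?thesis
    using indep_set_past_U[OF n(2) Y] by (simp only:)
qed

lemma nn_integral_propp_wilson_pair:
  fixes \<phi> :: "nat \<Rightarrow> 'a \<Rightarrow> 'a \<Rightarrow> ennreal"
  assumes meas: "\<And>i. case_prod (\<phi> i) \<in> borel_measurable (S (- int i) \<Otimes>\<^sub>M S (- int i))"
    and step: "\<And>i x x'. x \<in> space (S (- int i - 1)) \<Longrightarrow> x' \<in> space (S (- int i - 1)) \<Longrightarrow>
      \<phi> (Suc i) x x' = (\<integral>\<^sup>+\<omega>. \<phi> i (f (- int i) x (U (- int i) \<omega>)) (f (- int i) x' (U (- int i) \<omega>)) \<partial>M)"
    and a: "a \<in> space (S (- int (i + j)))" and b: "b \<in> space (S (- int (i + j)))"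
  shows "(\<integral>\<^sup>+\<omega>. \<phi> i (propp_wilson f U (- int (i + j)) a j \<omega>) (propp_wilson f U (- int (i + j)) b j \<omega>) \<partial>M)
    = \<phi> (i + j) a b"
  using a b
proof (induction j arbitrary: i)
  case 0
  then show ?case by (simp add: emeasure_space_1)
next
  case (Suc j)
  let ?s = "- int (i + Suc j)" and ?t = "- int i"
  let ?Y = "\<lambda>c. propp_wilson f U ?s c j"
  have Y: "?Y c \<omega> \<in> space (S (?t - 1))" if "c \<in> space (S ?s)" "\<omega> \<in> space M" for c \<omega>
    using measurable_space[OF measurable_propp_wilson[of ?s j c] that(2)] that(1) by simp
  have indep: "indep_set (sets (vimage_algebra (space M) (\<lambda>\<omega>. (?Y a \<omega>, ?Y b \<omega>)) (S (?t - 1) \<Otimes>\<^sub>M S (?t - 1))))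
      (sets (vimage_algebra (space M) (U ?t) (V ?t)))"
    by (rule indep_set_propp_wilson_U) (use Suc.prems in simp_all)
  have Y_pair: "(\<lambda>\<omega>. (?Y a \<omega>, ?Y b \<omega>)) \<in> M \<rightarrow>\<^sub>M S (?t - 1) \<Otimes>\<^sub>M S (?t - 1)"
    using measurable_propp_wilson[of ?s j] Suc.prems by (intro measurable_Pair) simp_all
  have U_t: "U ?t \<in> M \<rightarrow>\<^sub>M V ?t" using U_meas by simp
  have g: "(\<lambda>(p, u). \<phi> i (f ?t (fst p) u) (f ?t (snd p) u)) \<in> borel_measurable ((S (?t - 1) \<Otimes>\<^sub>M S (?t - 1)) \<Otimes>\<^sub>M V ?t)"
    using measurable_comp[OF measurable_f_pair meas[of i]] by (simp add: comp_def split_beta')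
  have "(\<integral>\<^sup>+\<omega>. \<phi> i (propp_wilson f U ?s a (Suc j) \<omega>) (propp_wilson f U ?s b (Suc j) \<omega>) \<partial>M)
      = (\<integral>\<^sup>+\<omega>. \<phi> i (f ?t (?Y a \<omega>) (U ?t \<omega>)) (f ?t (?Y b \<omega>) (U ?t \<omega>)) \<partial>M)"
  proof -
    have "?s + int j + 1 = ?t" by simp
    then show ?thesis by (simp only: propp_wilson.simps)
  qed
  also have "\<dots> = (\<integral>\<^sup>+\<omega>. \<integral>\<^sup>+\<omega>'. \<phi> i (f ?t (?Y a \<omega>) (U ?t \<omega>')) (f ?t (?Y b \<omega>) (U ?t \<omega>')) \<partial>M \<partial>M)"
    using nn_integral_indep_set[OF Y_pair U_t indep g] by simp
  also have "\<dots> = (\<integral>\<^sup>+\<omega>. \<phi> (Suc i) (?Y a \<omega>) (?Y b \<omega>) \<partial>M)"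
    using Suc.prems Y by (intro nn_integral_cong) (simp add: step)
  also have "\<dots> = \<phi> (Suc i + j) a b"
    using Suc.IH[of "Suc i"] Suc.prems by simp
  finally show ?case by simp
qed

lemma measurable_P: "n \<le> 0 \<Longrightarrow> P n \<in> S (n - 1) \<rightarrow>\<^sub>M subprob_algebra (S n)"
  using P_kernel measurable_prob_algebraD by blast

lemma measurable_cond_law: "cond_law S P k \<in> S (- int k) \<rightarrow>\<^sub>M subprob_algebra (S 0)"
proof (induction k)
  case 0
  then show ?case by (simp add: return_measurable)
next
  case (Suc k)
  have "P (- int k) \<in> S (- int k - 1) \<rightarrow>\<^sub>M subprob_algebra (S (- int k))"
    by (rule measurable_P) simp
  moreover have "(\<lambda>y. P (- int k) y \<bind> cond_law S P k) = cond_law S P (Suc k)"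
    by (rule ext) simp
  moreover have "- int (Suc k) = - int k - 1" by simp
  ultimately show ?case
    using measurable_bind2[OF _ Suc.IH, of "P (- int k)"] by (simp only:)
qed

lemma sets_P:
  assumes "n \<le> 0" and "x \<in> space (S (n - 1))"
  shows "sets (P n x) = sets (S n)"
  using measurable_space[OF measurable_P assms(2)] assms(1) by (simp add: space_subprob_algebra)

lemma emeasure_cond_law_Suc:
  assumes x: "x \<in> space (S (- int k - 1))" and A: "A \<in> sets (S 0)"
  shows "emeasure (cond_law S P (Suc k) x) A = (\<integral>\<^sup>+\<omega>. emeasure (cond_law S P k (f (- int k) x (U (- int k) \<omega>))) A \<partial>M)"
proof -
  have fU: "(\<lambda>\<omega>. f (- int k) x (U (- int k) \<omega>)) \<in> M \<rightarrow>\<^sub>M S (- int k)"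
    by (rule measurable_f_U_step[OF x])
  have law: "P (- int k) x = distr M (S (- int k)) (\<lambda>\<omega>. f (- int k) x (U (- int k) \<omega>))"
    using f_law x by simp
  have "space (P (- int k) x) \<noteq> {}"
    using law measurable_space[OF fU] not_empty by auto
  moreover have "cond_law S P k \<in> P (- int k) x \<rightarrow>\<^sub>M subprob_algebra (S 0)"
    using measurable_cond_law sets_P[of "- int k" x] x by (simp cong: measurable_cong_sets)
  ultimately have "emeasure (cond_law S P (Suc k) x) A = (\<integral>\<^sup>+x'. emeasure (cond_law S P k x') A \<partial>P (- int k) x)"
    using emeasure_bind[OF _ _ A] by simp
  also have "\<dots> = (\<integral>\<^sup>+\<omega>. emeasure (cond_law S P k (f (- int k) x (U (- int k) \<omega>))) A \<partial>M)"
    unfolding law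
    using measurable_comp[OF measurable_cond_law measurable_emeasure_subprob_algebra[OF A]]
    by (simp add: nn_integral_distr[OF fU] comp_def)
  finally show ?thesis .
qed

lemma distr_propp_wilson_eq_cond_law:
  assumes y: "y \<in> space (S (- int k))"
  shows "distr M (S 0) (propp_wilson f U (- int k) y k) = cond_law S P k y"
proof (rule measure_eqI)
  let ?Y = "propp_wilson f U (- int k) y k"
  have Y: "?Y \<in> M \<rightarrow>\<^sub>M S 0"
    using measurable_propp_wilson[of "- int k" k y] y by simp
  show "sets (distr M (S 0) ?Y) = sets (cond_law S P k y)"
    using measurable_space[OF measurable_cond_law y] by (simp add: space_subprob_algebra)
  fix A assume "A \<in> sets (distr M (S 0) ?Y)"
  then have A: "A \<in> sets (S 0)" by simp
  let ?\<phi> = "\<lambda>i x x'. emeasure (cond_law S P i x) A"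
  have "(\<integral>\<^sup>+\<omega>. ?\<phi> 0 (propp_wilson f U (- int (0 + k)) y k \<omega>) (propp_wilson f U (- int (0 + k)) y k \<omega>) \<partial>M)
      = ?\<phi> (0 + k) y y"
  proof (rule nn_integral_propp_wilson_pair[where \<phi> = ?\<phi>])
    show "case_prod (?\<phi> i) \<in> borel_measurable (S (- int i) \<Otimes>\<^sub>M S (- int i))" for i
      using measurable_comp[OF measurable_fst measurable_comp[OF measurable_cond_law measurable_emeasure_subprob_algebra[OF A]]]
      by (simp add: comp_def split_beta')
    show "?\<phi> (Suc i) x x' = (\<integral>\<^sup>+\<omega>. ?\<phi> i (f (- int i) x (U (- int i) \<omega>)) (f (- int i) x' (U (- int i) \<omega>)) \<partial>M)"
      if "x \<in> space (S (- int i - 1))" for i x x'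
      by (rule emeasure_cond_law_Suc[OF that A])
  qed (use y in simp_all)
  then have "(\<integral>\<^sup>+\<omega>. indicator A (?Y \<omega>) \<partial>M) = emeasure (cond_law S P k y) A"
    using measurable_space[OF Y] A by (simp add: emeasure_return)
  moreover have "emeasure (distr M (S 0) ?Y) A = (\<integral>\<^sup>+\<omega>. indicator A (?Y \<omega>) \<partial>M)"
    using A nn_integral_distr[OF Y, of "indicator A"] by simp
  ultimately show "emeasure (distr M (S 0) ?Y) A = emeasure (cond_law S P k y) A"
    by simp
qed

end

locale monotone_potential = increasing_representation M S V X U f P
  for M :: "'w measure" and S :: "int \<Rightarrow> 'a::linorder measure" and V :: "int \<Rightarrow> 'u measure"
    and X U f P +
  fixes F :: "'a \<Rightarrow> real" and c :: real and \<rho>0 :: "'a \<Rightarrow> 'a \<Rightarrow> real"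
  assumes F_meas: "F \<in> borel_measurable (S 0)"
    and F_bound: "\<And>a. a \<in> space (S 0) \<Longrightarrow> \<bar>F a\<bar> \<le> c"
    and F_mono: "mono_on (space (S 0)) F"
    and rho0_eq: "\<And>a b. a \<in> space (S 0) \<Longrightarrow> b \<in> space (S 0) \<Longrightarrow> \<rho>0 a b = \<bar>F a - F b\<bar>"
begin

definition cond_mean :: "nat \<Rightarrow> 'a \<Rightarrow> real" where
  "cond_mean k y = (\<integral>x. F x \<partial>cond_law S P k y)"

lemma measurable_cond_mean: "cond_mean k \<in> borel_measurable (S (- int k))"
  using measurable_comp[OF measurable_cond_law integral_measurable_subprob_algebra[OF F_meas]]
  by (simp add: cond_mean_def[abs_def] comp_def)

lemma cond_mean_0: "y \<in> space (S 0) \<Longrightarrow> cond_mean 0 y = F y"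
  by (simp add: cond_mean_def integral_return[OF _ F_meas])

lemma cond_mean_Suc:
  assumes y: "y \<in> space (S (- int k - 1))"
  shows "cond_mean (Suc k) y = (\<integral>\<omega>. cond_mean k (f (- int k) y (U (- int k) \<omega>)) \<partial>M)"
proof -
  have Py: "P (- int k) y \<in> space (subprob_algebra (S (- int k)))"
    using measurable_space[OF measurable_P y] by simp
  then interpret Py: subprob_space "P (- int k) y" by (simp add: space_subprob_algebra)
  have CL: "cond_law S P k \<in> P (- int k) y \<rightarrow>\<^sub>M subprob_algebra (S 0)"
    using measurable_cond_law sets_P[of "- int k" y] y by (simp cong: measurable_cong_sets)
  have "AE x in P (- int k) y. emeasure (cond_law S P k x) (space (cond_law S P k x)) \<le> ennreal 1"
    using measurable_space[OF CL]
    by (intro AE_I2) (simp add: space_subprob_algebra subprob_space.subprob_emeasure_le_1)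
  from integral_bind[OF F_meas F_bound CL Py.finite_measure_axioms this]
  have "cond_mean (Suc k) y = (\<integral>x. cond_mean k x \<partial>P (- int k) y)"
    by (simp add: cond_mean_def)
  also have "\<dots> = (\<integral>\<omega>. cond_mean k (f (- int k) y (U (- int k) \<omega>)) \<partial>M)"
  proof -
    have fU: "(\<lambda>\<omega>. f (- int k) y (U (- int k) \<omega>)) \<in> M \<rightarrow>\<^sub>M S (- int k)"
      by (rule measurable_f_U_step[OF y])
    have "P (- int k) y = distr M (S (- int k)) (\<lambda>\<omega>. f (- int k) y (U (- int k) \<omega>))"
      using f_law y by simp
    then show ?thesis
      using integral_distr[OF fU measurable_cond_mean] by simp
  qed
  finally show ?thesis .
qed

lemma cond_mean_bound: "y \<in> space (S (- int k)) \<Longrightarrow> \<bar>cond_mean k y\<bar> \<le> c"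
proof (induction k arbitrary: y)
  case 0
  then show ?case using F_bound by (simp add: cond_mean_0)
next
  case (Suc k)
  have "- int (Suc k) = - int k - 1" by simp
  with Suc.prems have y: "y \<in> space (S (- int k - 1))" by (simp only:)
  let ?g = "\<lambda>\<omega>. cond_mean k (f (- int k) y (U (- int k) \<omega>))"
  have fU: "(\<lambda>\<omega>. f (- int k) y (U (- int k) \<omega>)) \<in> M \<rightarrow>\<^sub>M S (- int k)"
    by (rule measurable_f_U_step[OF y])
  have int: "integrable M ?g"
    by (rule integrable_bounded_comp[OF fU measurable_cond_mean[of k] Suc.IH])
  have "AE \<omega> in M. ?g \<omega> \<le> c" and "AE \<omega> in M. - c \<le> ?g \<omega>"
    using measurable_space[OF fU] Suc.IH by (auto intro!: AE_I2 simp: abs_le_iff minus_le_iff)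
  from integral_le_const[OF int this(1)] integral_ge_const[OF int this(2)] show ?case
    by (simp add: cond_mean_Suc[OF y] abs_le_iff)
qed

lemma cond_mean_mono: "mono_on (space (S (- int k))) (cond_mean k)"
proof (induction k)
  case 0
  then show ?case using F_mono by (simp add: mono_on_def cond_mean_0)
next
  case (Suc k)
  have "cond_mean (Suc k) x \<le> cond_mean (Suc k) x'"
    if x: "x \<in> space (S (- int k - 1))" and x': "x' \<in> space (S (- int k - 1))" and "x \<le> x'" for x x'
  proof -
    have "AE \<omega> in M. f (- int k) x (U (- int k) \<omega>) \<le> f (- int k) x' (U (- int k) \<omega>)"
      using f_incr x x' \<open>x \<le> x'\<close> by simp
    then have "AE \<omega> in M. cond_mean k (f (- int k) x (U (- int k) \<omega>)) \<le> cond_mean k (f (- int k) x' (U (- int k) \<omega>))"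
      using Suc.IH measurable_space[OF measurable_f_U_step[OF x]] measurable_space[OF measurable_f_U_step[OF x']]
      by (rule AE_mono_on_comp)
    then show ?thesis
      using integrable_bounded_comp[OF measurable_f_U_step[OF x] measurable_cond_mean[of k] cond_mean_bound]
        integrable_bounded_comp[OF measurable_f_U_step[OF x'] measurable_cond_mean[of k] cond_mean_bound]
      by (simp add: cond_mean_Suc[OF x] cond_mean_Suc[OF x'] integral_mono_AE)
  qed
  moreover have "- int (Suc k) = - int k - 1" by simp
  ultimately show ?case by (simp only: mono_on_def) blast
qed

lemma integral_abs_diff_cond_mean:
  assumes x: "x \<in> space (S (- int k - 1))" and x': "x' \<in> space (S (- int k - 1))"
  shows "(\<integral>\<omega>. \<bar>cond_mean k (f (- int k) x (U (- int k) \<omega>)) - cond_mean k (f (- int k) x' (U (- int k) \<omega>))\<bar> \<partial>M)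
    = \<bar>cond_mean (Suc k) x - cond_mean (Suc k) x'\<bar>"
proof -
  have int: "integrable M (\<lambda>\<omega>. cond_mean k (f (- int k) z (U (- int k) \<omega>)))"
    if "z \<in> space (S (- int k - 1))" for z
    by (rule integrable_bounded_comp[OF measurable_f_U_step[OF that] measurable_cond_mean[of k] cond_mean_bound])
  have ordered: "(\<integral>\<omega>. \<bar>cond_mean k (f (- int k) z (U (- int k) \<omega>)) - cond_mean k (f (- int k) z' (U (- int k) \<omega>))\<bar> \<partial>M)
    = \<bar>cond_mean (Suc k) z - cond_mean (Suc k) z'\<bar>"
    if z: "z \<in> space (S (- int k - 1))" and z': "z' \<in> space (S (- int k - 1))" and "z \<le> z'" for z z'
  proof -
    have "AE \<omega> in M. f (- int k) z (U (- int k) \<omega>) \<le> f (- int k) z' (U (- int k) \<omega>)"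
      using f_incr z z' \<open>z \<le> z'\<close> by simp
    then have "AE \<omega> in M. cond_mean k (f (- int k) z (U (- int k) \<omega>)) \<le> cond_mean k (f (- int k) z' (U (- int k) \<omega>))"
      using cond_mean_mono measurable_space[OF measurable_f_U_step[OF z]] measurable_space[OF measurable_f_U_step[OF z']]
      by (rule AE_mono_on_comp)
    from integral_abs_diff_eq_if_AE_le[OF int[OF z] int[OF z'] this] show ?thesis
      by (simp add: cond_mean_Suc[OF z] cond_mean_Suc[OF z'])
  qed
  show ?thesis
  proof (cases "x \<le> x'")
    case True
    then show ?thesis by (rule ordered[OF x x'])
  next
    case False
    then show ?thesis
      using ordered[OF x' x] by (simp add: abs_minus_commute)
  qed
qed

lemma iter_kant_eq_abs_diff_cond_mean:
  "y \<in> space (S (- int k)) \<Longrightarrow> z \<in> space (S (- int k)) \<Longrightarrow>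
    iter_kant S P \<rho>0 k y z = \<bar>cond_mean k y - cond_mean k z\<bar>"
proof (induction k arbitrary: y z)
  case 0
  then show ?case by (simp add: rho0_eq cond_mean_0)
next
  case (Suc k)
  have "- int (Suc k) = - int k - 1" by simp
  with Suc.prems have y: "y \<in> space (S (- int k - 1))" and z: "z \<in> space (S (- int k - 1))"
    by (simp_all only:)
  have "iter_kant S P \<rho>0 (Suc k) y z = kantorovich (S (- int k)) (iter_kant S P \<rho>0 k)
      (distr M (S (- int k)) (\<lambda>\<omega>. f (- int k) y (U (- int k) \<omega>)))
      (distr M (S (- int k)) (\<lambda>\<omega>. f (- int k) z (U (- int k) \<omega>)))"
    using f_law y z by simp
  also have "\<dots> = \<bar>cond_mean (Suc k) y - cond_mean (Suc k) z\<bar>"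
    using kantorovich_eq_if_attained[OF measurable_f_U_step[OF y] measurable_f_U_step[OF z] measurable_cond_mean cond_mean_bound Suc.IH]
      integral_abs_diff_cond_mean[OF y z]
    by (simp add: cond_mean_Suc[OF y] cond_mean_Suc[OF z])
  finally show ?case .
qed

lemma integral_abs_diff_propp_wilson:
  assumes y: "y \<in> space (S (- int k))" and z: "z \<in> space (S (- int k))"
  shows "(\<integral>\<omega>. \<bar>F (propp_wilson f U (- int k) y k \<omega>) - F (propp_wilson f U (- int k) z k \<omega>)\<bar> \<partial>M)
    = \<bar>cond_mean k y - cond_mean k z\<bar>"
proof -
  let ?\<phi> = "\<lambda>i x x'. ennreal \<bar>cond_mean i x - cond_mean i x'\<bar>"
  let ?Y = "\<lambda>c. propp_wilson f U (- int k) c k"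
  have Y: "?Y c \<in> M \<rightarrow>\<^sub>M S 0" if "c \<in> space (S (- int k))" for c
    using measurable_propp_wilson[of "- int k" k c] that by simp
  have "(\<integral>\<^sup>+\<omega>. ?\<phi> 0 (propp_wilson f U (- int (0 + k)) y k \<omega>) (propp_wilson f U (- int (0 + k)) z k \<omega>) \<partial>M)
      = ?\<phi> (0 + k) y z"
  proof (rule nn_integral_propp_wilson_pair[where \<phi> = ?\<phi>])
    show "case_prod (?\<phi> i) \<in> borel_measurable (S (- int i) \<Otimes>\<^sub>M S (- int i))" for i
      using measurable_cond_mean[of i] by (simp add: split_beta')
    show "?\<phi> (Suc i) x x' = (\<integral>\<^sup>+\<omega>. ?\<phi> i (f (- int i) x (U (- int i) \<omega>)) (f (- int i) x' (U (- int i) \<omega>)) \<partial>M)"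
      if x: "x \<in> space (S (- int i - 1))" and x': "x' \<in> space (S (- int i - 1))" for i x x'
    proof -
      have "f (- int i) c (U (- int i) \<omega>) \<in> space (S (- int i))" if "c \<in> space (S (- int i - 1))" "\<omega> \<in> space M" for c \<omega>
        using measurable_space[OF measurable_f_U_step[OF that(1)] that(2)] .
      then show ?thesis
        using integrable_abs_diff_bounded_comp[OF measurable_f_U_step[OF x] measurable_f_U_step[OF x'] measurable_cond_mean cond_mean_bound]
        by (simp add: nn_integral_eq_integral integral_abs_diff_cond_mean[OF x x'])
    qed
  qed (use y z in simp_all)
  then have "(\<integral>\<^sup>+\<omega>. ennreal \<bar>F (?Y y \<omega>) - F (?Y z \<omega>)\<bar> \<partial>M) = ennreal \<bar>cond_mean k y - cond_mean k z\<bar>"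
    using measurable_space[OF Y[OF y]] measurable_space[OF Y[OF z]]
    by (simp add: cond_mean_0 cong: nn_integral_cong)
  then show ?thesis
    using integrable_abs_diff_bounded_comp[OF Y[OF y] Y[OF z] F_meas F_bound]
    by (simp add: nn_integral_eq_integral)
qed

lemma kantorovich_cond_law:
  assumes y: "y \<in> space (S (- int k))" and z: "z \<in> space (S (- int k))"
  shows "kantorovich (S 0) \<rho>0 (cond_law S P k y) (cond_law S P k z) = \<bar>cond_mean k y - cond_mean k z\<bar>"
proof -
  let ?Y = "\<lambda>c. propp_wilson f U (- int k) c k"
  have Y: "?Y c \<in> M \<rightarrow>\<^sub>M S 0" if "c \<in> space (S (- int k))" for c
    using measurable_propp_wilson[of "- int k" k c] that by simp
  have mean: "(\<integral>\<omega>. F (?Y c \<omega>) \<partial>M) = cond_mean k c" if "c \<in> space (S (- int k))" for c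
    using integral_distr[OF Y[OF that] F_meas] distr_propp_wilson_eq_cond_law[OF that]
    by (simp add: cond_mean_def)
  show ?thesis
    using kantorovich_eq_if_attained[OF Y[OF y] Y[OF z] F_meas F_bound rho0_eq]
      integral_abs_diff_propp_wilson[OF y z]
    by (simp add: mean[OF y] mean[OF z] distr_propp_wilson_eq_cond_law[OF y] distr_propp_wilson_eq_cond_law[OF z])
qed


lemma integral_propp_wilson:
  assumes y: "y \<in> space (S (- int k))" and z: "z \<in> space (S (- int k))"
  shows "(\<integral>\<omega>. \<rho>0 (propp_wilson f U (- int k) y k \<omega>) (propp_wilson f U (- int k) z k \<omega>) \<partial>M)
    = \<bar>cond_mean k y - cond_mean k z\<bar>"
proof -
  have "propp_wilson f U (- int k) x k \<omega> \<in> space (S 0)" if "x \<in> space (S (- int k))" "\<omega> \<in> space M" for x \<omega>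
    using measurable_space[OF measurable_propp_wilson[of "- int k" k x]] that by simp
  then show ?thesis
    using integral_abs_diff_propp_wilson[OF y z] y z rho0_eq
    by (simp cong: Bochner_Integration.integral_cong)
qed

lemma iter_kant_characterization:
  "pseudometric_on (space (S (- int k))) (iter_kant S P \<rho>0 k) \<and>
   linear_on (space (S (- int k))) (iter_kant S P \<rho>0 k) \<and>
   (\<forall>y\<in>space (S (- int k)). \<forall>z\<in>space (S (- int k)).
      iter_kant S P \<rho>0 k y z = kantorovich (S 0) \<rho>0 (cond_law S P k y) (cond_law S P k z) \<and>
      iter_kant S P \<rho>0 k y z =
        (\<integral>\<omega>. \<rho>0 (propp_wilson f U (- int k) y k \<omega>) (propp_wilson f U (- int k) z k \<omega>) \<partial>M))"
  using iter_kant_eq_abs_diff_cond_mean[of _ k] kantorovich_cond_law[of _ k] integral_propp_wilson[of _ k]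
    cond_mean_mono[of k]
  by (simp add: pseudometric_on_abs_diff linear_on_abs_diff)

end

theorem proposition3p12:
  fixes M :: "'w measure"
    and S :: "int \<Rightarrow> 'a::linorder measure"
    and V :: "int \<Rightarrow> 'u measure"
    and X :: "int \<Rightarrow> 'w \<Rightarrow> 'a"
    and U :: "int \<Rightarrow> 'w \<Rightarrow> 'u"
    and f :: "int \<Rightarrow> 'a \<Rightarrow> 'u \<Rightarrow> 'a"
    and P :: "int \<Rightarrow> 'a \<Rightarrow> 'a measure"
    and \<rho>0 :: "'a \<Rightarrow> 'a \<Rightarrow> real"
  assumes M: "prob_space M"
    \<comment> \<open>the Markov process (X_n)_{n<=0} with state spaces A_n = space (S n) and kernels P_n\<close>
    and X_meas: "\<forall>n\<le>0. X n \<in> measurable M (S n)"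
    and P_kernel: "\<forall>n\<le>0. P n \<in> measurable (S (n - 1)) (prob_algebra (S n))"
    and Markov: "\<forall>n\<le>0. \<forall>A\<in>sets (vimage_algebra (space M) (\<lambda>\<omega>. \<lambda>m\<in>{..n - 1}. X m \<omega>) (PiM {..n - 1} S)).
                   \<forall>B\<in>sets (S n).
                     emeasure M (A \<inter> (X n -` B \<inter> space M)) =
                     (\<integral>\<^sup>+\<omega>. emeasure (P n (X (n - 1) \<omega>)) B * indicator A \<omega> \<partial>M)"
    \<comment> \<open>monotonicity\<close>
    and monotonic: "\<forall>n\<le>0. \<forall>x\<in>space (S (n - 1)). \<forall>x'\<in>space (S (n - 1)).
                      x \<le> x' \<longrightarrow> stoch_le (S n) (P n x) (P n x')"
    \<comment> \<open>increasing representation (f_n, U_n)_{n<=0}\<close>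
    and U_meas: "\<forall>n\<le>0. U n \<in> measurable M (V n)"
    and f_meas: "\<forall>n\<le>0. (\<lambda>(x, u). f n x u) \<in> measurable (S (n - 1) \<Otimes>\<^sub>M V n) (S n)"
    and U_indep: "\<forall>n\<le>0. prob_space.indep_set M (sets (vimage_algebra (space M) (U n) (V n)))
                      (sets (vimage_algebra (space M) (\<lambda>\<omega>. \<lambda>m\<in>{..n - 1}. (X m \<omega>, U m \<omega>))
                               (PiM {..n - 1} (\<lambda>m. S m \<Otimes>\<^sub>M V m))))"
    and X_rec: "\<forall>n\<le>0. AE \<omega> in M. X n \<omega> = f n (X (n - 1) \<omega>) (U n \<omega>)"
    and f_law: "\<forall>n\<le>0. \<forall>x\<in>space (S (n - 1)). P n x = distr M (S n) (\<lambda>\<omega>. f n x (U n \<omega>))"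
    and f_incr: "\<forall>n\<le>0. \<forall>x\<in>space (S (n - 1)). \<forall>x'\<in>space (S (n - 1)).
                   x \<le> x' \<longrightarrow> (AE \<omega> in M. f n x (U n \<omega>) \<le> f n x' (U n \<omega>))"
    \<comment> \<open>rho_0 is a linear compact distance on A_0, A_0 carrying its Borel sigma-algebra\<close>
    and rho0_metric: "Metric_space (space (S 0)) \<rho>0"
    and rho0_compact: "compact_space (Metric_space.mtopology (space (S 0)) \<rho>0)"
    and rho0_borel: "sets (S 0) = sigma_sets (space (S 0)) {W. openin (Metric_space.mtopology (space (S 0)) \<rho>0) W}"
    and rho0_linear: "linear_on (space (S 0)) \<rho>0"
  shows "\<forall>n\<le>0.
           pseudometric_on (space (S n)) (iter_kant S P \<rho>0 (nat (- n))) \<and>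
           linear_on (space (S n)) (iter_kant S P \<rho>0 (nat (- n))) \<and>
           (\<forall>y\<in>space (S n). \<forall>z\<in>space (S n).
              iter_kant S P \<rho>0 (nat (- n)) y z =
                kantorovich (S 0) \<rho>0 (cond_law S P (nat (- n)) y) (cond_law S P (nat (- n)) z) \<and>
              iter_kant S P \<rho>0 (nat (- n)) y z =
                (\<integral>\<omega>. \<rho>0 (propp_wilson f U n y (nat (- n)) \<omega>) (propp_wilson f U n z (nat (- n)) \<omega>) \<partial>M))"
proof -
  interpret prob_space M by (rule M)
  have "space (S 0) \<noteq> {}"
    using measurable_space[OF X_meas[rule_format, of 0]] not_empty by auto
  then obtain F c where "F \<in> borel_measurable (S 0)" "\<And>a. a \<in> space (S 0) \<Longrightarrow> \<bar>F a\<bar> \<le> c"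
    "mono_on (space (S 0)) F" "\<And>a b. a \<in> space (S 0) \<Longrightarrow> b \<in> space (S 0) \<Longrightarrow> \<rho>0 a b = \<bar>F a - F b\<bar>"
    using linear_compact_metric_eq_abs_diff[OF rho0_metric rho0_compact rho0_borel refl rho0_linear] by blast
  then interpret monotone_potential M S V X U f P F c \<rho>0
    using M X_meas P_kernel U_meas f_meas U_indep f_law f_incr by unfold_locales auto
  show ?thesis
  proof (intro allI impI, goal_cases)
    case (1 n)
    then have n: "- int (nat (- n)) = n" by simp
    show ?case using iter_kant_characterization[of "nat (- n)"] unfolding n .
  qed
qed

end
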